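(* Under the assumption $\det\gamma_k\ne0$ for all $k\ge1$, for all $\lambda\in\mathbb R$ and $k\ge1$, $$\Big(\overleftarrow{\prod_{j=1}^k}G(i\lambda)\alpha_j\Big)\,\Pi\,G(i\lambda)\,\mho\,G(i\lambda)^*=\gamma_k\,G(i\lambda)^*\,\beta_{k+1}\overleftarrow{\prod_{j=1}^{k+1}}G(i\lambda)\alpha_j,$$ where $\overleftarrow{\prod_{j=1}^k}X_j:=X_kX_{k-1}\cdots X_1$ is the leftward-ordered product.
   Context: Let $m,N$ be even, $\mathbf J=\begin{bmatrix}0&1\\-1&0\end{bmatrix}$, $J:=I_{m/2}\otimes\mathbf J$. Let $\Theta\in\mathbb R^{N\times N}$ be antisymmetric and nonsingular, $\mathcal A\in\mathbb R^{N\times N}$ Hurwitz, $\mathcal B\in\mathbb R^{N\times m}$, $\mathcal C\in\mathbb R^{r\times N}$ with $\mathcal A\Theta+\Theta\mathcal A^T+\mho=0$, where $\mho:=\mathcal BJ\mathcal B^T$; $\Pi:=\mathcal C^T\mathcal C$; $G(s):=(sI_N-\mathcal A)^{-1}$; $(\cdot)^*$ is conjugate transpose. For a matrix $U$, $\mathbf L_{\mathcal A}(U):=\int_0^\infty e^{t\mathcal A}Ue^{t\mathcal A^T}dt$. Recursion: $\alpha_1=\gamma_0=\Theta$, $\beta_0=I_N$, $\beta_1=\Theta^{-1}\mho\Theta^{-1}$, and for $k\ge1$: $\gamma_k=\mathbf L_{\mathcal A}(\alpha_k\Pi^{\delta_{k1}}\gamma_{k-1})$, $\alpha_{k+1}=\gamma_k\beta_k$,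 $\beta_{k+1}=\gamma_k^{-1}\alpha_k\Pi^{\delta_{k1}}\gamma_{k-1}\gamma_k^{-1}$, where $\Pi^{\delta_{k1}}$ equals $\Pi$ if $k=1$ and $I_N$ otherwise. *)

theory Defs
  imports "HOL-Analysis.Analysis" "HOL-Library.Numeral_Type"
begin

(* Matrices are HOL-Analysis matrices: 'a^'c^'r is an 'r x 'c matrix (rows indexed by 'r). *)

primrec mpow :: "real^'n^'n \<Rightarrow> nat \<Rightarrow> real^'n^'n" where
  "mpow M 0 = mat 1"
| "mpow M (Suc k) = M ** mpow M k"

definition mexp :: "real \<Rightarrow> real^'n^'n \<Rightarrow> real^'n^'n" where
  "mexp t M = (\<Sum>k. ((t ^ k) / fact k) *\<^sub>R mpow M k)"

definition LA :: "real^'n^'n \<Rightarrow> real^'n^'n \<Rightarrow> real^'n^'n" where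
  "LA A U = integral {0..} (\<lambda>t. mexp t A ** U ** mexp t (transpose A))"

definition cmat :: "real^'c^'r \<Rightarrow> complex^'c^'r" where
  "cmat M = (\<chi> i j. complex_of_real (M $ i $ j))"

definition ctrans :: "complex^'c^'r \<Rightarrow> complex^'r^'c" where
  "ctrans M = (\<chi> i j. cnj (M $ j $ i))"

definition hurwitz :: "real^'n^'n \<Rightarrow> bool" where
  "hurwitz A \<longleftrightarrow> (\<forall>z::complex. det (mat z - cmat A) = 0 \<longrightarrow> Re z < 0)"

definition Jb :: "real^2^2" where
  "Jb = (\<chi> a b. if a = 0 \<and> b = 1 then 1 else if a = 1 \<and> b = 0 then -1 else 0)"

(* J = I_{m/2} \<otimes> bold J, with index set 'k \<times> 2, CARD('k) = m/2 *)
definition Jm :: "real^('k::finite \<times> 2)^('k \<times> 2)" where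
  "Jm = (\<chi> p q. if fst p = fst q then Jb $ snd p $ snd q else 0)"

definition Gres :: "real^'n^'n \<Rightarrow> complex \<Rightarrow> complex^'n^'n" where
  "Gres A s = matrix_inv (mat s - cmat A)"

(* abg A Th Pm Mho k = (alpha_{k+1}, beta_{k+1}, gamma_k) *)
primrec abg :: "real^'n^'n \<Rightarrow> real^'n^'n \<Rightarrow> real^'n^'n \<Rightarrow> real^'n^'n \<Rightarrow> nat
     \<Rightarrow> (real^'n^'n) \<times> (real^'n^'n) \<times> (real^'n^'n)" where
  "abg A Th Pm Mho 0 = (Th, matrix_inv Th ** Mho ** matrix_inv Th, Th)"
| "abg A Th Pm Mho (Suc k) =
     (let (al, be, ga) = abg A Th Pm Mho k;
          P = (if k = 0 then Pm else mat 1);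
          ga' = LA A (al ** P ** ga)
      in (ga' ** be, matrix_inv ga' ** al ** P ** ga ** matrix_inv ga', ga'))"

definition alpha where "alpha A Th Pm Mho j = fst (abg A Th Pm Mho (j - 1))"
definition beta where "beta A Th Pm Mho j = fst (snd (abg A Th Pm Mho (j - 1)))"
definition gamma where "gamma A Th Pm Mho k = snd (snd (abg A Th Pm Mho k))"

primrec lprod :: "(nat \<Rightarrow> complex^'n^'n) \<Rightarrow> nat \<Rightarrow> complex^'n^'n" where
  "lprod X 0 = mat 1"
| "lprod X (Suc k) = X (Suc k) ** lprod X k"

end

theory Submission
  imports Defs "HOL-Computational_Algebra.Fundamental_Theorem_Algebra" "HOL-Real_Asymp.Real_Asymp"
begin

text \<open>
  Each \<gamma> k solves a Lyapunov equation A Y + Y A^T + X = 0: for k = 0 with X = \<mho> by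
  hypothesis, and for k \<ge> 1 with X = \<alpha> k \<Pi>' \<gamma> (k - 1), where \<Pi>' is \<Pi> for k = 1 and I
  otherwise, because \<gamma> k = L_A(X) and A is Hurwitz. For s on the imaginary axis such an
  equation reads X = (sI - A) Y + Y (sI - A)^*, whence G X G^* = Y G^* + G Y for
  G = (sI - A)^-1, and so G X G^* = Y G^* (Y^-1 X Y^-1) G Y. As
  \<beta> (k + 1) = \<gamma> k^-1 X \<gamma> k^-1 and \<alpha> (k + 1) = \<gamma> k \<beta> k, the right-hand sides
  E k = \<gamma> k G^* \<beta> (k + 1) L (k + 1), with L the leftward product, satisfy E 0 = G \<mho> G^*
  and E (k + 1) = G \<alpha> (k + 1) \<Pi>' E k, which telescopes to the claim.

  The analytic input is that L_A(U) solves A Y + Y A^T + U = 0, i.e. that the derivative of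
  exp(tA) U exp(tA^T) integrates to -U over [0, \<infinity>). This needs exponential decay of exp(tA),
  obtained from an annihilating polynomial of A all of whose roots are eigenvalues: its linear
  factors A - \<mu> are peeled off one at a time, each step being the scalar estimate for
  z' = \<mu> z + O(exp(-\<epsilon> t)) with Re \<mu> \<le> -2\<epsilon>.
\<close>

lemma matrix_add_rdistrib: "((A::'a::semiring_1^'m^'n) + B) ** C = A ** C + B ** C"
  by (simp add: matrix_matrix_mult_def vec_eq_iff sum.distrib distrib_right)

lemma matrix_diff_rdistrib: "((A::'a::ring_1^'m^'n) - B) ** C = A ** C - B ** C"
  by (simp add: matrix_matrix_mult_def vec_eq_iff sum_subtractf left_diff_distrib)

lemma matrix_diff_ldistrib: "(C::'a::ring_1^'m^'n) ** (A - B) = C ** A - C ** B"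
  by (simp add: matrix_matrix_mult_def vec_eq_iff sum_subtractf right_diff_distrib)

lemma mat_matrix_mult: "mat c ** X = (\<chi> i j. c * X $ i $ j)"
  by (simp add: vec_eq_iff mat_def matrix_matrix_mult_def if_distrib if_distribR cong: if_cong)

lemma matrix_mult_mat: "X ** mat c = (\<chi> i j. X $ i $ j * (c::'a::semiring_1))"
  by (simp add: vec_eq_iff mat_def matrix_matrix_mult_def if_distrib if_distribR cong: if_cong)

lemma mat_commute: "mat c ** X = X ** mat (c::'a::comm_semiring_1)"
  by (simp add: mat_matrix_mult matrix_mult_mat mult.commute)

lemma mat_mult_mat: "mat a ** mat b = mat (a * (b::'a::comm_semiring_1))"
  by (simp add: mat_matrix_mult vec_eq_iff) (simp add: mat_def)

lemma mat_add_mat: "mat a + mat b = mat (a + (b::'a::semiring_1))"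
  by (simp add: vec_eq_iff mat_def)

lemma matrix_inv_inverse:
  assumes "invertible M"
  shows "M ** matrix_inv M = mat 1" "matrix_inv M ** M = mat 1"
proof -
  from assms obtain M' where "M ** M' = mat 1 \<and> M' ** M = mat 1" unfolding invertible_def by blast
  then have "M ** matrix_inv M = mat 1 \<and> matrix_inv M ** M = mat 1"
    unfolding matrix_inv_def by (rule someI)
  then show "M ** matrix_inv M = mat 1" "matrix_inv M ** M = mat 1" by auto
qed

section \<open>The Frobenius norm of real matrices\<close>

lemma norm_matrix_squared: "(norm (M::real^'m^'n))^2 = (\<Sum>i\<in>UNIV. \<Sum>j\<in>UNIV. (M$i$j)^2)"
  by (simp only: power2_norm_eq_inner) (simp add: inner_vec_def power2_eq_square)

lemma norm_vector_squared: "(norm (x::real^'m))^2 = (\<Sum>j\<in>UNIV. (x$j)^2)"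
  by (simp only: power2_norm_eq_inner) (simp add: inner_vec_def power2_eq_square)

lemma norm_matrix_mult_le:
  fixes A :: "real^'m^'n" and B :: "real^'p^'m"
  shows "norm (A ** B) \<le> norm A * norm B"
proof -
  have entry: "((A**B)$i$j)^2 \<le> (norm (A$i))^2 * (norm (column j B))^2" for i j
  proof -
    have "(A**B)$i$j = A$i \<bullet> column j B"
      by (simp add: matrix_matrix_mult_def inner_vec_def column_def mult.commute)
    then have "\<bar>(A**B)$i$j\<bar> \<le> norm (A$i) * norm (column j B)"
      using Cauchy_Schwarz_ineq2 by simp
    then have "\<bar>(A**B)$i$j\<bar>^2 \<le> (norm (A$i) * norm (column j B))^2"
      by (rule power_mono) simp
    then show ?thesis by (simp add: power_mult_distrib)
  qed
  have "(norm (A**B))^2 = (\<Sum>i\<in>UNIV. \<Sum>j\<in>UNIV. ((A**B)$i$j)^2)" by (rule norm_matrix_squared)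
  also have "\<dots> \<le> (\<Sum>i\<in>UNIV. \<Sum>j\<in>UNIV. (norm (A$i))^2 * (norm (column j B))^2)"
    by (intro sum_mono entry)
  also have "\<dots> = (\<Sum>i\<in>UNIV. (norm (A$i))^2) * (\<Sum>j\<in>UNIV. (norm (column j B))^2)"
    by (simp add: sum_product)
  also have "(\<Sum>i\<in>UNIV. (norm (A$i))^2) = (norm A)^2"
    by (simp add: norm_matrix_squared norm_vector_squared)
  also have "(\<Sum>j\<in>UNIV. (norm (column j B))^2) = (norm B)^2"
    unfolding norm_matrix_squared norm_vector_squared column_def
    by (simp add: sum.swap[of "\<lambda>i j. (B$i$j)^2"])
  finally have "(norm (A**B))^2 \<le> (norm A * norm B)^2" by (simp add: power_mult_distrib)
  then show ?thesis by (rule power2_le_imp_le) simp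
qed

lemma norm_transpose: "norm (transpose (x::real^'m^'n)) = norm x"
  by (simp add: norm_eq_sqrt_inner inner_vec_def transpose_def sum.swap[of "\<lambda>i j. x$i$j * x$i$j"])

lemma norm_le_sum_abs_entries: "norm (M::real^'n^'m) \<le> (\<Sum>i\<in>UNIV. \<Sum>j\<in>UNIV. \<bar>M $ i $ j\<bar>)"
proof -
  have "norm M \<le> (\<Sum>i\<in>UNIV. norm (M $ i))"
    unfolding norm_vec_def by (rule L2_set_le_sum) simp
  also have "\<dots> \<le> (\<Sum>i\<in>UNIV. \<Sum>j\<in>UNIV. \<bar>M $ i $ j\<bar>)"
    by (intro sum_mono norm_le_l1_cart)
  finally show ?thesis .
qed

lemma bounded_bilinear_matrix_mult:
  "bounded_bilinear ((**) :: real^'m^'n \<Rightarrow> real^'p^'m \<Rightarrow> real^'p^'n)"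
proof (rule bounded_bilinear.intro)
  show "\<exists>K. \<forall>a b. norm (a ** b) \<le> norm a * norm (b::real^'p^'m) * K"
    by (rule exI[of _ 1]) (simp add: norm_matrix_mult_le)
qed (simp_all add: matrix_add_rdistrib matrix_add_ldistrib scalar_matrix_assoc matrix_scalar_ac)

lemmas bounded_linear_matrix_mult_left = bounded_bilinear.bounded_linear_right[OF bounded_bilinear_matrix_mult]
lemmas bounded_linear_matrix_mult_right = bounded_bilinear.bounded_linear_left[OF bounded_bilinear_matrix_mult]

lemma bounded_linear_matrix_entry: "bounded_linear (\<lambda>X::real^'m^'n. X $ i $ j)"
  using bounded_linear_compose[OF bounded_linear_vec_nth[of j] bounded_linear_vec_nth[of i]] by simp

lemma bounded_linear_transpose: "bounded_linear (transpose :: real^'m^'n \<Rightarrow> real^'n^'m)"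
proof (rule bounded_linear_intro[where K=1])
  show "norm (transpose x) \<le> norm x * 1" for x :: "real^'m^'n" by (simp add: norm_transpose)
qed (simp_all add: transpose_def vec_eq_iff)


section \<open>The matrix exponential\<close>

lemma mpow_Suc_right: "mpow M (Suc k) = mpow M k ** M"
  by (induction k) (simp_all add: matrix_mul_assoc)

lemma mpow_commute: "M ** mpow M k = mpow M k ** M"
  using mpow_Suc_right by simp

lemma mpow_transpose: "mpow (transpose M) k = transpose (mpow M k)"
proof (induction k)
  case (Suc k)
  have "mpow (transpose M) (Suc k) = transpose M ** transpose (mpow M k)" using Suc by simp
  also have "\<dots> = transpose (mpow M (Suc k))" by (simp only: mpow_Suc_right matrix_transpose_mul)
  finally show ?case .
qed simp

lemma norm_mpow_le: "norm (mpow M k) \<le> norm (mat 1 :: real^'n^'n) * norm (M::real^'n^'n) ^ k"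
proof (induction k)
  case (Suc k)
  have "norm (mpow M (Suc k)) \<le> norm M * norm (mpow M k)"
    using norm_matrix_mult_le[of M "mpow M k"] by simp
  also have "\<dots> \<le> norm M * (norm (mat 1 :: real^'n^'n) * norm M ^ k)"
    by (rule mult_left_mono[OF Suc]) simp
  finally show ?case by (simp add: algebra_simps)
qed simp

lemma summable_mexp: "summable (\<lambda>k. ((t ^ k) / fact k) *\<^sub>R mpow (M::real^'n^'n) k)"
proof (rule summable_norm_cancel, rule summable_comparison_test)
  let ?c = "norm (mat 1 :: real^'n^'n)"
  show "summable (\<lambda>k. ?c * (inverse (fact k) * (\<bar>t\<bar> * norm M) ^ k))"
    by (intro summable_mult summable_exp)
  have "norm (((t ^ n) / fact n) *\<^sub>R mpow M n) \<le> ?c * (inverse (fact n) * (\<bar>t\<bar> * norm M) ^ n)" for n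
  proof -
    have "norm (((t ^ n) / fact n) *\<^sub>R mpow M n) = (\<bar>t\<bar>^n / fact n) * norm (mpow M n)"
      by (simp add: power_abs)
    also have "\<dots> \<le> (\<bar>t\<bar>^n / fact n) * (?c * norm M ^ n)"
      by (rule mult_left_mono[OF norm_mpow_le]) simp
    finally show ?thesis by (simp add: power_mult_distrib field_simps)
  qed
  then show "\<exists>N. \<forall>n\<ge>N. norm (norm (((t ^ n) / fact n) *\<^sub>R mpow M n))
                          \<le> ?c * (inverse (fact n) * (\<bar>t\<bar> * norm M) ^ n)"
    by simp
qed

lemma bounded_linear_mexp:
  "bounded_linear L \<Longrightarrow> L (mexp t M) = (\<Sum>k. ((t ^ k) / fact k) *\<^sub>R L (mpow M k))"
  unfolding mexp_def by (simp add: bounded_linear.suminf[OF _ summable_mexp] linear_simps)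

lemma mexp_commute: "M ** mexp t M = mexp t M ** M"
proof -
  have "M ** mexp t M = (\<Sum>k. (t^k/fact k) *\<^sub>R (M ** mpow M k))"
    by (rule bounded_linear_mexp[OF bounded_linear_matrix_mult_left])
  moreover have "mexp t M ** M = (\<Sum>k. (t^k/fact k) *\<^sub>R (mpow M k ** M))"
    by (rule bounded_linear_mexp[OF bounded_linear_matrix_mult_right])
  ultimately show ?thesis by (simp add: mpow_commute)
qed

lemma mexp_transpose: "mexp t (transpose M) = transpose (mexp t M)"
  using bounded_linear_mexp[OF bounded_linear_transpose, of t M] by (simp add: mexp_def mpow_transpose)

lemma mexp_zero: "mexp 0 M = mat 1"
proof -
  have "(\<lambda>k. ((0 ^ k) / fact k) *\<^sub>R mpow M k) = (\<lambda>k. if k = 0 then mpow M 0 else 0)"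
    by (auto simp: fun_eq_iff)
  moreover have "(\<lambda>k. if k = 0 then mpow M 0 else 0) sums mat 1"
    using sums_single[of 0 "mpow M"] by (simp add: if_distrib cong: if_cong)
  ultimately show ?thesis unfolding mexp_def by (simp add: sums_iff)
qed

lemma mexp_entry_has_field_derivative:
  "((\<lambda>t. mexp t M $ i $ j) has_field_derivative ((M ** mexp t M) $ i $ j)) (at t)"
proof -
  define c where "c k = mpow M k $ i $ j / fact k" for k
  have summable: "summable (\<lambda>k. c k * y ^ k)" for y
    using bounded_linear.summable[OF bounded_linear_matrix_entry summable_mexp]
    by (simp add: c_def mult.commute)
  have series: "(\<lambda>t. mexp t M $ i $ j) = (\<lambda>x. \<Sum>n. c n * x ^ n)"
    using bounded_linear_mexp[OF bounded_linear_matrix_entry[of i j]] by (simp add: fun_eq_iff c_def mult.commute)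
  have "diffs c n * t ^ n = ((t ^ n) / fact n) * (M ** mpow M n) $ i $ j" for n
  proof -
    have "diffs c n = real (Suc n) * ((M ** mpow M n) $ i $ j / (real (Suc n) * fact n))"
      unfolding diffs_def c_def by (simp only: mpow.simps fact_Suc of_nat_mult)
    then show ?thesis by (simp del: of_nat_Suc)
  qed
  moreover have "(M ** mexp t M) $ i $ j = (\<Sum>k. ((t ^ k) / fact k) * (M ** mpow M k) $ i $ j)"
    using bounded_linear_mexp[OF bounded_linear_compose[OF bounded_linear_matrix_entry
          bounded_linear_matrix_mult_left[of M]], of t M]
    by simp
  ultimately have "(\<Sum>n. diffs c n * t ^ n) = (M ** mexp t M) $ i $ j"
    by simp
  then show ?thesis
    using termdiffs_strong_converges_everywhere[OF summable, of t] by (simp add: series)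
qed

lemma mexp_has_vector_derivative:
  "((\<lambda>t. mexp t M) has_vector_derivative (M ** mexp t M)) (at t within S)"
proof -
  have "((\<lambda>t. mexp t M) has_derivative (\<lambda>h. h *\<^sub>R (M ** mexp t M))) (at t within S)"
  proof (subst has_derivative_componentwise_within, intro ballI)
    fix b :: "real^'a^'a" assume "b \<in> Basis"
    then obtain p q where b: "b = axis p (axis q 1)" by (auto simp: Basis_vec_def)
    have "((\<lambda>t. mexp t M $ p $ q) has_derivative (*) ((M ** mexp t M) $ p $ q)) (at t within S)"
      using has_field_derivative_at_within[OF mexp_entry_has_field_derivative]
      by (simp add: has_field_derivative_def)
    moreover have "(\<lambda>h. h *\<^sub>R (M ** mexp t M) \<bullet> b) = (*) ((M ** mexp t M) $ p $ q)"
      by (auto simp: b inner_axis fun_eq_iff)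
    ultimately show "((\<lambda>x. mexp x M \<bullet> b) has_derivative (\<lambda>h. h *\<^sub>R (M ** mexp t M) \<bullet> b)) (at t within S)"
      by (simp add: b inner_axis)
  qed
  then show ?thesis by (simp add: has_vector_derivative_def)
qed

lemma cmat_mult: "cmat (A ** B) = cmat A ** cmat B"
  by (simp add: cmat_def matrix_matrix_mult_def vec_eq_iff)

lemma cmat_add: "cmat (A + B) = cmat A + cmat B"
  by (simp add: cmat_def vec_eq_iff)

lemma cmat_uminus: "cmat (- A) = - cmat A"
  by (simp add: cmat_def vec_eq_iff)

lemma cmat_zero [simp]: "cmat 0 = 0"
  by (simp add: cmat_def vec_eq_iff)

lemma cmat_mat: "cmat (mat c) = mat (of_real c)"
  by (simp add: cmat_def vec_eq_iff mat_def)

lemma cmat_scaleR: "cmat (c *\<^sub>R M) = mat (of_real c) ** cmat M"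
  by (simp add: cmat_def mat_matrix_mult vec_eq_iff)

lemma cmat_sum: "finite S \<Longrightarrow> cmat (sum f S) = (\<Sum>i\<in>S. cmat (f i))"
  by (induction S rule: finite_induct) (simp_all add: cmat_add)

lemma ctrans_mult: "ctrans (X ** Y) = ctrans Y ** ctrans X"
  by (simp add: ctrans_def matrix_matrix_mult_def vec_eq_iff mult.commute)

lemma ctrans_diff: "ctrans (X - Y) = ctrans X - ctrans Y"
  by (simp add: ctrans_def vec_eq_iff)

lemma ctrans_mat: "ctrans (mat c) = mat (cnj c)"
  by (simp add: ctrans_def vec_eq_iff mat_def)

lemma ctrans_cmat: "ctrans (cmat M) = cmat (transpose M)"
  by (simp add: ctrans_def cmat_def transpose_def vec_eq_iff)

section \<open>Annihilating polynomials\<close>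

definition poly_mat :: "complex poly \<Rightarrow> complex^'n^'n \<Rightarrow> complex^'n^'n" where
  "poly_mat p X = fold_coeffs (\<lambda>a Y. mat a + X ** Y) p 0"

lemma poly_mat_0 [simp]: "poly_mat 0 X = 0"
  by (simp add: poly_mat_def)

lemma poly_mat_pCons: "poly_mat (pCons a p) X = mat a + X ** poly_mat p X"
proof (cases "a = 0 \<and> p = 0")
  case False
  then have "fold_coeffs (\<lambda>a Y. mat a + X ** Y) (pCons a p)
           = (\<lambda>Y. mat a + X ** Y) \<circ> fold_coeffs (\<lambda>a Y. mat a + X ** Y) p"
    by (auto intro: fold_coeffs_pCons_coeff_not_0_eq fold_coeffs_pCons_not_0_0_eq)
  then show ?thesis by (simp add: poly_mat_def)
qed simp

lemma poly_mat_add: "poly_mat (p + q) X = poly_mat p X + poly_mat q X"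
proof (induction p arbitrary: q rule: pCons_induct)
  case (pCons a p)
  obtain b q' where q: "q = pCons b q'" by (cases q)
  show ?case using pCons.IH[of q']
    by (simp add: q poly_mat_pCons matrix_add_ldistrib flip: mat_add_mat)
qed simp

lemma poly_mat_smult: "poly_mat (smult c p) X = mat c ** poly_mat p X"
proof (induction p rule: pCons_induct)
  case (pCons a p)
  have "mat c ** (X ** poly_mat p X) = X ** (mat c ** poly_mat p X)"
    by (simp add: mat_commute flip: matrix_mul_assoc)
  then show ?case using pCons.IH
    by (simp add: poly_mat_pCons matrix_add_ldistrib flip: mat_mult_mat)
qed simp

lemma poly_mat_mult: "poly_mat (p * q) X = poly_mat p X ** poly_mat q X"
  by (induction p rule: pCons_induct)
     (simp_all add: poly_mat_pCons poly_mat_add poly_mat_smult matrix_add_rdistrib matrix_mul_assoc)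

lemma poly_mat_linear: "poly_mat [:- \<mu>, 1:] X = X - mat \<mu>"
proof -
  have "mat (- \<mu>) = - (mat \<mu> :: complex^'n^'n)" by (simp add: vec_eq_iff mat_def)
  then show ?thesis by (simp add: poly_mat_pCons)
qed

lemma poly_mat_linear_factors_add_mset:
  "poly_mat (\<Prod>\<mu>\<in>#add_mset a R. [:- \<mu>, 1:]) X = (X - mat a) ** poly_mat (\<Prod>\<mu>\<in>#R. [:- \<mu>, 1:]) X"
  by (simp only: image_mset_add_mset prod_mset.add_mset poly_mat_mult poly_mat_linear)

lemma poly_mat_sum: "finite S \<Longrightarrow> poly_mat (sum f S) X = (\<Sum>i\<in>S. poly_mat (f i) X)"
  by (induction S rule: finite_induct) (simp_all add: poly_mat_add)

lemma poly_mat_monom: "poly_mat (monom c k) (cmat A) = mat c ** cmat (mpow A k)"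
proof -
  have "poly_mat (monom 1 k) (cmat A) = cmat (mpow A k)"
    by (induction k) (simp_all add: one_pCons monom_Suc poly_mat_pCons cmat_mat cmat_mult)
  moreover have "monom c k = smult c (monom 1 k)" by (simp add: smult_monom)
  ultimately show ?thesis by (simp add: poly_mat_smult)
qed

text \<open>Among the powers A^0, \<dots>, A^D, where D = n^2 is the dimension of the matrix space,
  either two coincide or they are linearly dependent.\<close>

lemma exists_annihilating_poly: "\<exists>q::complex poly. q \<noteq> 0 \<and> poly_mat q (cmat (A::real^'n^'n)) = 0"
proof (cases "inj_on (mpow A) {..DIM(real^'n^'n)}")
  case False
  then obtain i j where ij: "i \<noteq> j" "mpow A i = mpow A j" unfolding inj_on_def by blast
  define q where "q = monom (1::complex) i + monom (-1) j"
  have "coeff q i = 1" using ij by (simp add: q_def coeff_monom)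
  moreover have "poly_mat q (cmat A) = 0"
    using ij by (simp add: q_def poly_mat_add poly_mat_monom) (simp add: mat_matrix_mult vec_eq_iff)
  ultimately show ?thesis by (intro exI[of _ q]) auto
next
  case True
  define S where "S = mpow A ` {..DIM(real^'n^'n)}"
  have "card S = DIM(real^'n^'n) + 1" using True by (simp add: S_def card_image)
  then have "dependent S" using independent_bound[of S] by auto
  then obtain t u v0 where t: "finite t" "t \<subseteq> S" "(\<Sum>v\<in>t. u v *\<^sub>R v) = 0"
    and v0: "v0 \<in> t" "u v0 \<noteq> 0"
    unfolding dependent_explicit by blast
  define idx where "idx v = the_inv_into {..DIM(real^'n^'n)} (mpow A) v" for v
  have idx: "v \<in> S \<Longrightarrow> mpow A (idx v) = v" for v
    using True by (auto simp: idx_def S_def the_inv_into_f_f)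
  define q where "q = (\<Sum>v\<in>t. monom (complex_of_real (u v)) (idx v))"
  have "coeff q (idx v0) = (\<Sum>v\<in>t. if v = v0 then complex_of_real (u v) else 0)"
    unfolding q_def coeff_sum coeff_monom
  proof (rule sum.cong)
    fix v assume "v \<in> t"
    then have "idx v = idx v0 \<longleftrightarrow> v = v0" using idx t(2) v0(1) by (metis subsetD)
    then show "(if idx v = idx v0 then complex_of_real (u v) else 0)
             = (if v = v0 then complex_of_real (u v) else 0)"
      by simp
  qed simp
  then have "coeff q (idx v0) \<noteq> 0" using t(1) v0 by simp
  moreover have "poly_mat q (cmat A) = cmat (\<Sum>v\<in>t. u v *\<^sub>R v)"
    using idx t(2) by (auto simp: q_def poly_mat_sum[OF t(1)] poly_mat_monom cmat_sum[OF t(1)]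
        cmat_scaleR intro!: sum.cong)
  ultimately show ?thesis using t(3) by (intro exI[of _ q]) auto
qed

lemma invertible_poly_mat_linear_factors:
  "\<forall>\<mu>\<in>#R. det (mat \<mu> - X) \<noteq> 0 \<Longrightarrow> invertible (poly_mat (\<Prod>\<mu>\<in>#R. [:- \<mu>, 1:]) (X::complex^'n^'n))"
proof (induction R)
  case empty
  show ?case unfolding invertible_def by (intro exI[of _ "mat 1"]) (simp add: one_pCons poly_mat_pCons)
next
  case (add a R)
  have "invertible (mat a - X)" using add.prems by (simp add: invertible_det_nz)
  moreover have "invertible (mat (-1) :: complex^'n^'n)"
    unfolding invertible_def by (intro exI[of _ "mat (-1)"]) (simp add: mat_mult_mat)
  ultimately have "invertible ((mat a - X) ** mat (-1))" by (rule invertible_mult)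
  moreover have "(mat a - X) ** mat (-1) = X - mat a"
    unfolding matrix_mult_mat by (simp add: vec_eq_iff mat_def)
  ultimately have "invertible (X - mat a)" by simp
  then show ?case
    unfolding poly_mat_linear_factors_add_mset using add by (simp add: invertible_mult)
qed

text \<open>Factor an annihilating polynomial into linear factors and cancel those that are not
  eigenvalues, which act invertibly.\<close>

lemma eigenvalue_annihilator:
  "\<exists>R. (\<forall>\<mu>\<in>#R. det (mat \<mu> - cmat A) = 0) \<and> poly_mat (\<Prod>\<mu>\<in>#R. [:- \<mu>, 1:]) (cmat (A::real^'n^'n)) = 0"
proof -
  obtain q where q: "q \<noteq> 0" "poly_mat q (cmat A) = 0" using exists_annihilating_poly by blast
  let ?eig = "\<lambda>\<mu>. det (mat \<mu> - cmat A) = 0"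
  let ?P = "\<lambda>R. poly_mat (\<Prod>\<mu>\<in>#R. [:- \<mu>, 1:]) (cmat A)"
  define R where "R = filter_mset ?eig (proots q)"
  define R' where "R' = filter_mset (\<lambda>\<mu>. \<not> ?eig \<mu>) (proots q)"
  define c where "c = lead_coeff q"
  have "(\<Prod>\<mu>\<in>#R. [:- \<mu>, 1:]) * (\<Prod>\<mu>\<in>#R'. [:- \<mu>, 1:]) = (\<Prod>\<mu>\<in>#proots q. [:- \<mu>, 1:])"
    unfolding R_def R'_def by (simp flip: prod_mset.union image_mset_union multiset_partition)
  then have "q = smult c ((\<Prod>\<mu>\<in>#R. [:- \<mu>, 1:]) * (\<Prod>\<mu>\<in>#R'. [:- \<mu>, 1:]))"
    unfolding c_def by (simp add: complex_poly_decompose_multiset)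
  then have q_factored: "mat c ** (?P R ** ?P R') = 0"
    using q(2) by (simp add: poly_mat_smult poly_mat_mult)
  have "inverse c * c = 1" using q(1) by (simp add: c_def)
  then have "?P R = (mat (inverse c) ** mat c) ** ?P R ** (?P R' ** matrix_inv (?P R'))"
    using matrix_inv_inverse(1)[OF invertible_poly_mat_linear_factors[of R' "cmat A"]]
    by (simp add: R'_def mat_mult_mat)
  also have "\<dots> = mat (inverse c) ** (mat c ** (?P R ** ?P R')) ** matrix_inv (?P R')"
    by (simp only: matrix_mul_assoc)
  also have "\<dots> = 0" by (simp add: q_factored)
  finally show ?thesis by (intro exI[of _ R]) (simp add: R_def)
qed

section \<open>Exponential decay of the matrix exponential of a Hurwitz matrix\<close>

lemma norm_diff_le_exp_growth:
  fixes v v' :: "real \<Rightarrow> 'a::real_normed_vector"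
  assumes deriv: "\<And>s. s \<ge> 0 \<Longrightarrow> (v has_vector_derivative v' s) (at s)"
    and bound: "\<And>s. s \<ge> 0 \<Longrightarrow> norm (v' s) \<le> C * exp (b * s)"
    and b: "b > 0" and t: "t \<ge> 0"
  shows "norm (v t - v 0) \<le> C * exp (b * t) / b"
proof -
  have "norm (v' 0) \<le> C" using bound[of 0] by simp
  then have C: "C \<ge> 0" using norm_ge_zero order_trans by blast
  define \<phi> where "\<phi> s = C * exp (b * s) / b" for s
  have \<phi>_deriv: "(\<phi> has_vector_derivative C * exp (b * s)) (at s)" for s
  proof -
    have "(\<phi> has_real_derivative C * exp (b * s)) (at s)"
      unfolding \<phi>_def using b by (auto intro!: derivative_eq_intros)
    then show ?thesis by (simp add: has_real_derivative_iff_has_vector_derivative)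
  qed
  have mean_value: "norm (v t - v 0) \<le> \<phi> t - \<phi> 0" if "0 < t"
    using that
  proof (rule differentiable_bound_general)
    show "continuous_on {0..t} v"
      by (rule continuous_at_imp_continuous_on)
         (metis atLeastAtMost_iff has_vector_derivative_continuous deriv)
    show "continuous_on {0..t} \<phi>"
      by (rule continuous_at_imp_continuous_on) (metis has_vector_derivative_continuous \<phi>_deriv)
    show "(v has_vector_derivative v' x) (at x)" if "0 < x" for x
      using deriv that by simp
    show "norm (v' x) \<le> C * exp (b * x)" if "0 < x" for x
      using bound that by simp
  qed (rule \<phi>_deriv)
  show ?thesis
  proof (cases "t = 0")
    case False
    with t mean_value have "norm (v t - v 0) \<le> \<phi> t - \<phi> 0" by simp
    also have "\<dots> \<le> \<phi> t" using C b by (simp add: \<phi>_def)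
    finally show ?thesis by (simp add: \<phi>_def)
  qed (use C b in simp)
qed

text \<open>Variation of constants: exp(-\<mu> t) z(t) has derivative exp(-\<mu> t) (z' - \<mu> z), which is
  O(exp((a - \<epsilon>) t)) with a = -Re \<mu> \<ge> 2\<epsilon>.\<close>

lemma linear_ode_exp_decay:
  fixes z z' :: "real \<Rightarrow> complex" and \<mu> :: complex
  assumes deriv: "\<And>t. t \<ge> 0 \<Longrightarrow> (z has_vector_derivative z' t) (at t)"
    and forcing: "\<And>t. t \<ge> 0 \<Longrightarrow> cmod (z' t - \<mu> * z t) \<le> C * exp (- \<epsilon> * t)"
    and \<epsilon>: "\<epsilon> > 0" "Re \<mu> \<le> -2*\<epsilon>"
    and t: "t \<ge> 0"
  shows "cmod (z t) \<le> (cmod (z 0) + C/\<epsilon>) * exp (- \<epsilon> * t)"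
proof -
  have "cmod (z' 0 - \<mu> * z 0) \<le> C" using forcing[of 0] by simp
  then have C: "C \<ge> 0" using norm_ge_zero order_trans by blast
  define a where "a = - Re \<mu>"
  have a: "a - \<epsilon> \<ge> \<epsilon>" using \<epsilon> by (simp add: a_def)
  define v where "v s = exp (- (\<mu> * of_real s)) * z s" for s
  define v' where "v' s = exp (- (\<mu> * of_real s)) * (z' s - \<mu> * z s)" for s
  have v_deriv: "(v has_vector_derivative v' s) (at s)" if s: "s \<ge> 0" for s
  proof -
    have "((\<lambda>w. exp (- (\<mu> * w))) has_field_derivative (- \<mu> * exp (- (\<mu> * of_real s)))) (at (of_real s))"
      by (auto intro!: derivative_eq_intros)
    from has_vector_derivative_real_field[OF this]
    have "((\<lambda>s. exp (- (\<mu> * of_real s))) has_vector_derivative (- \<mu> * exp (- (\<mu> * of_real s)))) (at s)" .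
    from has_vector_derivative_mult[OF this deriv[OF s]]
    show ?thesis unfolding v_def v'_def by (simp add: algebra_simps)
  qed
  have v'_bound: "norm (v' s) \<le> C * exp ((a - \<epsilon>) * s)" if s: "s \<ge> 0" for s
  proof -
    have "norm (v' s) = exp (a * s) * cmod (z' s - \<mu> * z s)"
      by (simp add: v'_def norm_mult norm_exp_eq_Re a_def)
    also have "\<dots> \<le> exp (a * s) * (C * exp (- \<epsilon> * s))" using forcing[OF s] by simp
    also have "\<dots> = C * exp ((a - \<epsilon>) * s)" by (simp add: algebra_simps flip: exp_add)
    finally show ?thesis .
  qed
  have "norm (v t - v 0) \<le> C * exp ((a - \<epsilon>) * t) / (a - \<epsilon>)"
    using a \<epsilon> t by (intro norm_diff_le_exp_growth[OF v_deriv v'_bound]) auto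
  also have "\<dots> \<le> C * exp ((a - \<epsilon>) * t) / \<epsilon>"
    using C a \<epsilon> by (intro divide_left_mono) (auto intro: mult_pos_pos)
  finally have v_growth: "norm (v t - v 0) \<le> C * exp ((a - \<epsilon>) * t) / \<epsilon>" .
  have "cmod (z t) = exp (- a * t) * norm (v t)"
    by (simp add: v_def norm_mult norm_exp_eq_Re a_def flip: mult.assoc exp_add)
  also have "\<dots> \<le> exp (- a * t) * (cmod (z 0) + C * exp ((a - \<epsilon>) * t) / \<epsilon>)"
    using norm_triangle_sub[of "v t" "v 0"] v_growth by (intro mult_left_mono) (auto simp: v_def)
  also have "\<dots> = exp (- a * t) * cmod (z 0) + C / \<epsilon> * exp (- \<epsilon> * t)"
    by (simp add: algebra_simps flip: exp_add)
  also have "\<dots> \<le> exp (- \<epsilon> * t) * cmod (z 0) + C / \<epsilon> * exp (- \<epsilon> * t)"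
    using a \<epsilon> t by (intro add_right_mono mult_right_mono) (auto intro: mult_right_mono)
  also have "\<dots> = (cmod (z 0) + C/\<epsilon>) * exp (- \<epsilon> * t)" by (simp add: algebra_simps)
  finally show ?thesis .
qed

definition entries_decay :: "real \<Rightarrow> (real \<Rightarrow> complex^'m^'n) \<Rightarrow> bool" where
  "entries_decay \<epsilon> F \<longleftrightarrow> (\<exists>C. \<forall>t\<ge>0. \<forall>i j. cmod (F t $ i $ j) \<le> C * exp (- \<epsilon> * t))"

lemma cmat_mexp_mult_has_vector_derivative:
  "((\<lambda>t. (cmat (mexp t A) ** N) $ i $ j) has_vector_derivative
      ((cmat A ** (cmat (mexp t A) ** N)) $ i $ j)) (at t)"
proof -
  have "((\<lambda>t. \<Sum>k\<in>UNIV. complex_of_real (mexp t A $ i $ k) * N $ k $ j) has_vector_derivative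
         (\<Sum>k\<in>UNIV. complex_of_real ((A ** mexp t A) $ i $ k) * N $ k $ j)) (at t)"
    by (intro has_vector_derivative_sum has_vector_derivative_mult_left
        has_vector_derivative_of_real mexp_entry_has_field_derivative)
  then show ?thesis
    by (simp add: matrix_mul_assoc flip: cmat_mult) (simp add: matrix_matrix_mult_def cmat_def)
qed

lemma cmat_mexp_commute_shift:
  "cmat (mexp t A) ** ((cmat A - mat \<mu>) ** W) = (cmat A - mat \<mu>) ** (cmat (mexp t A) ** W)"
proof -
  have "cmat (mexp t A) ** (cmat A - mat \<mu>) = (cmat A - mat \<mu>) ** cmat (mexp t A)"
    by (simp add: matrix_diff_ldistrib matrix_diff_rdistrib mat_commute mexp_commute flip: cmat_mult)
  then show ?thesis by (simp only: matrix_mul_assoc)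
qed

lemma entries_decay_peel_linear_factor:
  assumes decay: "entries_decay \<epsilon> (\<lambda>t. (cmat A - mat \<mu>) ** (cmat (mexp t A) ** N))"
    and \<epsilon>: "\<epsilon> > 0" "Re \<mu> \<le> -2*\<epsilon>"
  shows "entries_decay \<epsilon> (\<lambda>t. cmat (mexp t A) ** N)"
proof -
  obtain C where C: "\<And>t i j. t \<ge> 0 \<Longrightarrow>
      cmod (((cmat A - mat \<mu>) ** (cmat (mexp t A) ** N)) $ i $ j) \<le> C * exp (- \<epsilon> * t)"
    using decay unfolding entries_decay_def by blast
  define K where "K = (\<Sum>i\<in>UNIV. \<Sum>j\<in>UNIV. cmod (N $ i $ j)) + C / \<epsilon>"
  have "cmod ((cmat (mexp t A) ** N) $ i $ j) \<le> K * exp (- \<epsilon> * t)" if t: "t \<ge> 0" for t i j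
  proof -
    let ?z = "\<lambda>t. (cmat (mexp t A) ** N) $ i $ j"
    have "cmod (?z t) \<le> (cmod (?z 0) + C/\<epsilon>) * exp (- \<epsilon> * t)"
    proof (rule linear_ode_exp_decay[OF cmat_mexp_mult_has_vector_derivative _ \<epsilon> t])
      fix s :: real assume "s \<ge> 0"
      then show "cmod ((cmat A ** (cmat (mexp s A) ** N)) $ i $ j - \<mu> * ?z s) \<le> C * exp (- \<epsilon> * s)"
        using C[of s i j] by (simp add: matrix_diff_rdistrib mat_matrix_mult)
    qed
    moreover have "cmod (?z 0) \<le> (\<Sum>i\<in>UNIV. \<Sum>j\<in>UNIV. cmod (N $ i $ j))"
      using member_le_sum[of i UNIV "\<lambda>i. \<Sum>j\<in>UNIV. cmod (N $ i $ j)"]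
        member_le_sum[of j UNIV "\<lambda>j. cmod (N $ i $ j)"]
      by (simp add: mexp_zero cmat_mat sum_nonneg)
    ultimately show ?thesis
      unfolding K_def by (meson add_right_mono exp_ge_zero mult_right_mono order_trans)
  qed
  then show ?thesis unfolding entries_decay_def by blast
qed

lemma entries_decay_peel_linear_factors:
  assumes "\<forall>\<mu>\<in>#R. Re \<mu> \<le> -2*\<epsilon>" "\<epsilon> > 0"
    and "entries_decay \<epsilon> (\<lambda>t. cmat (mexp t A) ** (poly_mat (\<Prod>\<mu>\<in>#R. [:- \<mu>, 1:]) (cmat A) ** N))"
  shows "entries_decay \<epsilon> (\<lambda>t. cmat (mexp t A) ** N)"
  using assms
proof (induction R arbitrary: N)
  case (add \<mu> R)
  have "entries_decay \<epsilon> (\<lambda>t. (cmat A - mat \<mu>) **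
          (cmat (mexp t A) ** (poly_mat (\<Prod>\<mu>\<in>#R. [:- \<mu>, 1:]) (cmat A) ** N)))"
    using add.prems(3) unfolding poly_mat_linear_factors_add_mset
    by (simp add: cmat_mexp_commute_shift flip: matrix_mul_assoc)
  then have "entries_decay \<epsilon> (\<lambda>t. cmat (mexp t A) ** (poly_mat (\<Prod>\<mu>\<in>#R. [:- \<mu>, 1:]) (cmat A) ** N))"
    using add.prems(1,2) by (intro entries_decay_peel_linear_factor) auto
  then show ?case
    using add.IH add.prems(1,2) by simp
qed (simp add: one_pCons poly_mat_pCons)

lemma hurwitz_mexp_decay:
  assumes "hurwitz A"
  obtains C \<epsilon> where "\<epsilon> > 0" "\<And>t. t \<ge> 0 \<Longrightarrow> norm (mexp t A) \<le> C * exp (- \<epsilon> * t)"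
proof -
  obtain R where R: "\<forall>\<mu>\<in>#R. det (mat \<mu> - cmat A) = 0" "poly_mat (\<Prod>\<mu>\<in>#R. [:- \<mu>, 1:]) (cmat A) = 0"
    using eigenvalue_annihilator by blast
  have neg: "\<forall>\<mu>\<in>#R. Re \<mu> < 0" using R(1) assms by (auto simp: hurwitz_def)
  define \<epsilon> where "\<epsilon> = Min (insert 1 ((\<lambda>\<mu>. - Re \<mu>) ` set_mset R)) / 2"
  have \<epsilon>: "\<epsilon> > 0" using neg by (auto simp: \<epsilon>_def)
  have "\<forall>\<mu>\<in>#R. Re \<mu> \<le> -2*\<epsilon>"
  proof
    fix \<mu> assume "\<mu> \<in># R"
    then have "Min (insert 1 ((\<lambda>\<mu>. - Re \<mu>) ` set_mset R)) \<le> - Re \<mu>" by (intro Min_le) auto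
    then show "Re \<mu> \<le> -2*\<epsilon>" unfolding \<epsilon>_def by linarith
  qed
  moreover have "entries_decay \<epsilon> (\<lambda>t. cmat (mexp t A) ** (poly_mat (\<Prod>\<mu>\<in>#R. [:- \<mu>, 1:]) (cmat A) ** mat 1))"
    unfolding entries_decay_def R(2) by (intro exI[of _ 0]) simp
  ultimately have "entries_decay \<epsilon> (\<lambda>t. cmat (mexp t A) ** mat 1)"
    using entries_decay_peel_linear_factors \<epsilon> by blast
  then obtain C where C: "\<And>t i j. t \<ge> 0 \<Longrightarrow> \<bar>mexp t A $ i $ j\<bar> \<le> C * exp (- \<epsilon> * t)"
    unfolding entries_decay_def by (auto simp: cmat_def)
  have "norm (mexp t A) \<le> (real CARD('a) * real CARD('a) * C) * exp (- \<epsilon> * t)" if "t \<ge> 0" for t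
  proof -
    have "norm (mexp t A) \<le> (\<Sum>i\<in>UNIV. \<Sum>j\<in>UNIV. \<bar>mexp t A $ i $ j\<bar>)"
      by (rule norm_le_sum_abs_entries)
    also have "\<dots> \<le> (\<Sum>i\<in>(UNIV::'a set). \<Sum>j\<in>(UNIV::'a set). C * exp (- \<epsilon> * t))"
      using C[OF that] by (intro sum_mono)
    finally show ?thesis by simp
  qed
  with \<epsilon> show thesis by (rule that)
qed

section \<open>The Lyapunov equation\<close>

lemma exp_decay_integrable:
  fixes f :: "real \<Rightarrow> 'b::euclidean_space"
  assumes cont: "continuous_on {a..} f" and decay: "\<And>t. t \<ge> a \<Longrightarrow> norm (f t) \<le> K * exp (- \<delta> * t)"
    and \<delta>: "\<delta> > 0"
  shows "f integrable_on {a..}" "norm (integral {a..} f) \<le> K * (exp (- \<delta> * a) / \<delta>)"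
proof -
  have bound: "((\<lambda>t. K * exp (- \<delta> * t)) has_integral K * (exp (- \<delta> * a) / \<delta>)) {a..}"
    by (rule has_integral_mult_right[OF has_integral_exp_minus_to_infinity[OF \<delta>]])
  have "{a..} \<in> sets lebesgue" by simp
  from measurable_bounded_by_integrable_imp_integrable
      [OF continuous_imp_measurable_on_sets_lebesgue[OF cont this] _ _ this]
  show integrable: "f integrable_on {a..}"
    using bound decay by auto
  have "norm (integral {a..} f) \<le> integral {a..} (\<lambda>t. K * exp (- \<delta> * t))"
    by (rule integral_norm_bound_integral[OF integrable]) (use bound decay in auto)
  also have "\<dots> = K * (exp (- \<delta> * a) / \<delta>)" using bound by (rule integral_unique)
  finally show "norm (integral {a..} f) \<le> K * (exp (- \<delta> * a) / \<delta>)" .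
qed

lemma has_integral_derivative_exp_decay:
  fixes F F' :: "real \<Rightarrow> 'b::euclidean_space"
  assumes deriv: "\<And>t. t \<ge> a \<Longrightarrow> (F has_vector_derivative F' t) (at t)"
    and cont: "continuous_on {a..} F'"
    and F_decay: "\<And>t. t \<ge> a \<Longrightarrow> norm (F t) \<le> K * exp (- \<delta> * t)"
    and F'_decay: "\<And>t. t \<ge> a \<Longrightarrow> norm (F' t) \<le> K' * exp (- \<delta> * t)"
    and \<delta>: "\<delta> > 0"
  shows "(F' has_integral - F a) {a..}"
proof -
  define I where "I = integral {a..} F'"
  have tail: "F' integrable_on {T..}" "norm (integral {T..} F') \<le> K' * (exp (- \<delta> * T) / \<delta>)"
    if "T \<ge> a" for T
    using exp_decay_integrable[OF continuous_on_subset[OF cont] _ \<delta>, of T K'] F'_decay that by auto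
  have "norm (I + F a) \<le> (K + K' / \<delta>) * exp (- \<delta> * T)" if T: "T \<ge> a" for T
  proof -
    have "(F' has_integral (F T - F a)) {a..T}"
      using deriv T by (intro fundamental_theorem_of_calculus) (auto intro: has_vector_derivative_at_within)
    moreover have "(F' has_integral integral {T..} F') {T..}" using tail(1)[OF T] by (rule integrable_integral)
    moreover have "{a..T} \<inter> {T..} = {T}" using T by auto
    then have "negligible ({a..T} \<inter> {T..})" by simp
    ultimately have "(F' has_integral (F T - F a + integral {T..} F')) ({a..T} \<union> {T..})"
      by (rule has_integral_Un)
    moreover have "{a..T} \<union> {T..} = {a..}" using T by auto
    ultimately have "I + F a = F T + integral {T..} F'" unfolding I_def by (simp add: integral_unique)
    then have "norm (I + F a) \<le> norm (F T) + norm (integral {T..} F')" by (simp add: norm_triangle_ineq)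
    also have "\<dots> \<le> K * exp (- \<delta> * T) + K' * (exp (- \<delta> * T) / \<delta>)"
      by (intro add_mono F_decay tail(2) T)
    finally show ?thesis by (simp add: algebra_simps)
  qed
  then have "eventually (\<lambda>T. norm (I + F a) \<le> (K + K' / \<delta>) * exp (- \<delta> * T)) at_top"
    by (intro eventually_at_top_linorderI)
  moreover have "((\<lambda>T. (K + K' / \<delta>) * exp (- \<delta> * T)) \<longlongrightarrow> 0) at_top"
    using \<delta> by real_asymp
  ultimately have "norm (I + F a) \<le> 0"
    by (intro tendsto_le[OF trivial_limit_at_top_linorder _ tendsto_const])
  then have "I = - F a" by (simp add: eq_neg_iff_add_eq_0)
  then show ?thesis
    using tail(1)[of a] unfolding I_def by (simp add: has_integral_integral)
qed

lemma mexp_congruence_has_vector_derivative: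
  "((\<lambda>t. mexp t A ** U ** mexp t (transpose A)) has_vector_derivative
      A ** (mexp t A ** U ** mexp t (transpose A)) + (mexp t A ** U ** mexp t (transpose A)) ** transpose A)
    (at t)"
proof -
  have "((\<lambda>t. mexp t A ** U) has_vector_derivative (A ** mexp t A) ** U) (at t)"
    by (rule bounded_linear.has_vector_derivative[OF bounded_linear_matrix_mult_right mexp_has_vector_derivative])
  from bounded_bilinear.has_vector_derivative[OF bounded_bilinear_matrix_mult this mexp_has_vector_derivative]
  show ?thesis by (simp add: mexp_commute matrix_mul_assoc add.commute)
qed

lemma norm_mexp_congruence_le:
  assumes "norm (mexp t A) \<le> c"
  shows "norm (mexp t A ** U ** mexp t (transpose A)) \<le> c * c * norm U"
proof -
  have "norm (mexp t A ** U ** mexp t (transpose A)) \<le> norm (mexp t A) * norm U * norm (mexp t A)"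
    using norm_matrix_mult_le[of "mexp t A ** U" "mexp t (transpose A)"]
      norm_matrix_mult_le[of "mexp t A" U]
    by (simp add: mexp_transpose norm_transpose) (meson mult_right_mono norm_ge_zero order_trans)
  also have "\<dots> \<le> c * norm U * c"
  proof -
    have "c \<ge> 0" using assms norm_ge_zero order_trans by blast
    then show ?thesis using assms by (intro mult_mono) auto
  qed
  finally show ?thesis by (simp add: algebra_simps)
qed

lemma LA_solves_lyapunov:
  assumes "hurwitz A"
  shows "A ** LA A U + LA A U ** transpose A + U = 0"
proof -
  obtain C \<epsilon> where \<epsilon>: "\<epsilon> > 0" and C: "\<And>t. t \<ge> 0 \<Longrightarrow> norm (mexp t A) \<le> C * exp (- \<epsilon> * t)"
    using hurwitz_mexp_decay[OF assms] by blast
  define F where "F t = mexp t A ** U ** mexp t (transpose A)" for t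
  define F' where "F' t = A ** F t + F t ** transpose A" for t
  have F_decay: "norm (F t) \<le> C * C * norm U * exp (- (2 * \<epsilon>) * t)" if "t \<ge> 0" for t
    using norm_mexp_congruence_le[OF C[OF that], of U]
    by (simp add: F_def algebra_simps flip: exp_add)
  have F'_decay: "norm (F' t) \<le> 2 * norm A * (C * C * norm U) * exp (- (2 * \<epsilon>) * t)"
    if t: "t \<ge> 0" for t
  proof -
    have "norm (F' t) \<le> norm A * norm (F t) + norm (F t) * norm (transpose A)"
      unfolding F'_def by (meson norm_triangle_le add_mono norm_matrix_mult_le)
    also have "\<dots> = 2 * norm A * norm (F t)" by (simp add: norm_transpose)
    also have "\<dots> \<le> 2 * norm A * (C * C * norm U * exp (- (2 * \<epsilon>) * t))"
      by (rule mult_left_mono[OF F_decay[OF t]]) simp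
    finally show ?thesis by simp
  qed
  have F_deriv: "(F has_vector_derivative F' t) (at t)" for t
    unfolding F_def F'_def by (rule mexp_congruence_has_vector_derivative)
  have F_cont: "continuous_on S F" for S
    by (rule continuous_at_imp_continuous_on) (metis has_vector_derivative_continuous F_deriv)
  have "continuous_on {0..} F'"
    unfolding F'_def
    by (intro continuous_intros bounded_linear.continuous_on[OF bounded_linear_matrix_mult_left F_cont]
        bounded_linear.continuous_on[OF bounded_linear_matrix_mult_right F_cont])
  then have F'_integral: "(F' has_integral - U) {0..}"
    using has_integral_derivative_exp_decay[where a=0, OF F_deriv _ F_decay F'_decay] \<epsilon>
    by (simp add: F_def mexp_zero)
  have F_int: "F integrable_on {0..}"
    using exp_decay_integrable(1)[OF F_cont F_decay] \<epsilon> by simp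
  then have "integral {0..} F' = integral {0..} (\<lambda>t. A ** F t) + integral {0..} (\<lambda>t. F t ** transpose A)"
    unfolding F'_def
    using integrable_linear[OF F_int bounded_linear_matrix_mult_left, of A]
      integrable_linear[OF F_int bounded_linear_matrix_mult_right, of "transpose A"]
    by (simp add: integral_add o_def)
  also have "\<dots> = A ** LA A U + LA A U ** transpose A"
    unfolding LA_def F_def[symmetric]
    using integral_linear[OF F_int bounded_linear_matrix_mult_left, of A]
      integral_linear[OF F_int bounded_linear_matrix_mult_right, of "transpose A"]
    by (simp add: o_def)
  finally show ?thesis
    using F'_integral by (simp add: integral_unique) (metis add.commute neg_eq_iff_add_eq_0)
qed

section \<open>The recursion on the imaginary axis\<close>

lemma inverse_sandwich:
  fixes G Gi H Hi Y Yi X :: "complex^'n^'n"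
  assumes G: "G ** Gi = mat 1" "Gi ** G = mat 1" and H: "H ** Hi = mat 1" "Hi ** H = mat 1"
    and Y: "Y ** Yi = mat 1" "Yi ** Y = mat 1" and X: "X = Gi ** Y + Y ** Hi"
  shows "Y ** H ** (Yi ** X ** Yi) ** G ** Y = G ** X ** H"
proof -
  have "Y ** H ** (Yi ** X ** Yi) ** G ** Y
      = Y ** H ** Yi ** Gi ** (Y ** Yi) ** G ** Y + Y ** H ** (Yi ** Y) ** Hi ** Yi ** G ** Y"
    by (simp add: X matrix_add_ldistrib matrix_add_rdistrib matrix_mul_assoc)
  also have "\<dots> = Y ** H ** Yi ** (Gi ** G) ** Y + Y ** (H ** Hi) ** Yi ** G ** Y"
    by (simp add: Y matrix_mul_assoc)
  also have "\<dots> = Y ** H ** (Yi ** Y) + (Y ** Yi) ** G ** Y"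
    by (simp add: G H matrix_mul_assoc)
  also have "\<dots> = Y ** H + G ** Y"
    by (simp add: Y)
  also have "\<dots> = (G ** Gi) ** Y ** H + G ** Y ** (Hi ** H)"
    by (simp add: G H)
  also have "\<dots> = G ** X ** H"
    by (simp add: X matrix_add_ldistrib matrix_add_rdistrib matrix_mul_assoc)
  finally show ?thesis .
qed

lemma lyapunov_resolvent_sandwich:
  fixes A X Y :: "real^'n^'n"
  assumes s: "Re s = 0" "det (mat s - cmat A) \<noteq> 0"
    and Y: "det Y \<noteq> 0" and lyapunov: "A ** Y + Y ** transpose A + X = 0"
  shows "cmat Y ** ctrans (Gres A s) ** cmat (matrix_inv Y ** X ** matrix_inv Y) ** Gres A s ** cmat Y
       = Gres A s ** cmat X ** ctrans (Gres A s)"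
proof -
  define Gi where "Gi = mat s - cmat A"
  have G: "Gres A s ** Gi = mat 1" "Gi ** Gres A s = mat 1"
    using matrix_inv_inverse[of Gi] s(2) by (simp_all add: Gres_def Gi_def invertible_det_nz)
  have H: "ctrans (Gres A s) ** ctrans Gi = mat 1" "ctrans Gi ** ctrans (Gres A s) = mat 1"
    using arg_cong[OF G(2), of ctrans] arg_cong[OF G(1), of ctrans] by (simp_all add: ctrans_mult ctrans_mat)
  have Y': "cmat Y ** cmat (matrix_inv Y) = mat 1" "cmat (matrix_inv Y) ** cmat Y = mat 1"
    using matrix_inv_inverse[of Y] Y by (simp_all add: invertible_det_nz cmat_mat flip: cmat_mult)
  have "cmat A ** cmat Y + cmat Y ** cmat (transpose A) = - cmat X"
    using lyapunov by (metis add_eq_0_iff2 cmat_add cmat_mult cmat_uminus)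
  moreover have "mat s ** cmat Y + cmat Y ** mat (cnj s) = 0"
    using s(1) by (simp add: mat_matrix_mult matrix_mult_mat vec_eq_iff complex_eq_iff)
  moreover have "Gi ** cmat Y + cmat Y ** ctrans Gi
      = (mat s ** cmat Y + cmat Y ** mat (cnj s)) - (cmat A ** cmat Y + cmat Y ** cmat (transpose A))"
    by (simp add: Gi_def ctrans_diff ctrans_mat ctrans_cmat matrix_diff_ldistrib matrix_diff_rdistrib
        algebra_simps)
  ultimately have "cmat X = Gi ** cmat Y + cmat Y ** ctrans Gi"
    by simp
  from inverse_sandwich[OF G H Y' this] show ?thesis by (simp add: cmat_mult)
qed

lemma
  shows alpha_1: "alpha A Th Pm Mho (Suc 0) = Th"
    and beta_1: "beta A Th Pm Mho (Suc 0) = matrix_inv Th ** Mho ** matrix_inv Th"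
    and gamma_0: "gamma A Th Pm Mho 0 = Th"
    and gamma_Suc: "gamma A Th Pm Mho (Suc k)
          = LA A (alpha A Th Pm Mho (Suc k) ** (if k = 0 then Pm else mat 1) ** gamma A Th Pm Mho k)"
    and alpha_Suc_Suc: "alpha A Th Pm Mho (Suc (Suc k)) = gamma A Th Pm Mho (Suc k) ** beta A Th Pm Mho (Suc k)"
    and beta_Suc_Suc: "beta A Th Pm Mho (Suc (Suc k)) = matrix_inv (gamma A Th Pm Mho (Suc k))
          ** (alpha A Th Pm Mho (Suc k) ** (if k = 0 then Pm else mat 1) ** gamma A Th Pm Mho k)
          ** matrix_inv (gamma A Th Pm Mho (Suc k))"
  by (simp_all add: alpha_def beta_def gamma_def Let_def prod.case_eq_if matrix_mul_assoc)

lemma resolvent_product_identity: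
  fixes A Th Pm Mho :: "real^'n^'n"
  assumes hurwitz: "hurwitz A" and s: "Re s = 0"
    and Th: "det Th \<noteq> 0" "A ** Th + Th ** transpose A + Mho = 0"
    and gamma: "\<forall>j\<ge>1. det (gamma A Th Pm Mho j) \<noteq> 0"
  defines "G \<equiv> Gres A s" and "X \<equiv> \<lambda>j. Gres A s ** cmat (alpha A Th Pm Mho j)"
  shows "lprod X (Suc m) ** cmat Pm ** G ** cmat Mho ** ctrans G
       = cmat (gamma A Th Pm Mho (Suc m)) ** ctrans G ** cmat (beta A Th Pm Mho (Suc (Suc m)))
         ** lprod X (Suc (Suc m))"
proof -
  let ?\<alpha> = "alpha A Th Pm Mho" and ?\<beta> = "beta A Th Pm Mho" and ?\<gamma> = "gamma A Th Pm Mho"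
  let ?P = "\<lambda>k::nat. if k = 0 then Pm else mat 1"
  define E where "E k = cmat (?\<gamma> k) ** ctrans G ** cmat (?\<beta> (Suc k)) ** lprod X (Suc k)" for k
  have "det (mat s - cmat A) \<noteq> 0"
    using hurwitz s by (auto simp: hurwitz_def)
  note sandwich = lyapunov_resolvent_sandwich[OF s this, folded G_def]
  have E_0: "E 0 = G ** cmat Mho ** ctrans G"
    using sandwich[OF Th] by (simp add: E_def X_def G_def alpha_1 beta_1 gamma_0 matrix_mul_assoc)
  have E_Suc: "E (Suc k) = G ** cmat (?\<alpha> (Suc k) ** ?P k) ** E k" for k
  proof -
    let ?F = "?\<alpha> (Suc k) ** ?P k ** ?\<gamma> k"
    have "A ** ?\<gamma> (Suc k) + ?\<gamma> (Suc k) ** transpose A + ?F = 0"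
      unfolding gamma_Suc by (rule LA_solves_lyapunov[OF hurwitz])
    moreover have "det (?\<gamma> (Suc k)) \<noteq> 0" using gamma by simp
    ultimately have "cmat (?\<gamma> (Suc k)) ** ctrans G ** cmat (?\<beta> (Suc (Suc k))) ** G ** cmat (?\<gamma> (Suc k))
                   = G ** cmat ?F ** ctrans G"
      using sandwich by (simp add: beta_Suc_Suc)
    then show ?thesis
      by (simp add: E_def X_def G_def alpha_Suc_Suc cmat_mult matrix_mul_assoc)
  qed
  have "lprod X (Suc m) ** cmat Pm ** E 0 = E (Suc m)"
  proof (induction m)
    case 0
    show ?case by (simp add: E_Suc X_def G_def cmat_mult matrix_mul_assoc)
  next
    case (Suc m)
    have "lprod X (Suc (Suc m)) ** cmat Pm ** E 0 = X (Suc (Suc m)) ** (lprod X (Suc m) ** cmat Pm ** E 0)"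
      by (simp only: lprod.simps matrix_mul_assoc)
    also have "\<dots> = E (Suc (Suc m))"
      unfolding Suc.IH by (simp add: E_Suc[of "Suc m"] X_def G_def cmat_mat)
    finally show ?case .
  qed
  then show ?thesis unfolding E_0 unfolding E_def by (simp only: matrix_mul_assoc)
qed

theorem lemma7p4:
  fixes Th A :: "real^'n^'n" and B :: "real^('k::finite \<times> 2)^'n" and C :: "real^'n^'r"
    and lam :: real and k :: nat
  assumes "even CARD('n)"
    and "transpose Th = - Th" and "det Th \<noteq> 0"
    and "hurwitz A"
    and "A ** Th + Th ** transpose A + B ** Jm ** transpose B = 0"
    and "\<forall>j\<ge>1. det (gamma A Th (transpose C ** C) (B ** Jm ** transpose B) j) \<noteq> 0"
    and "k \<ge> 1"
  shows "(let Mho = B ** Jm ** transpose B; Pm = transpose C ** C;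
              G = Gres A (\<i> * complex_of_real lam);
              X = (\<lambda>j. G ** cmat (alpha A Th Pm Mho j))
          in lprod X k ** cmat Pm ** G ** cmat Mho ** ctrans G
             = cmat (gamma A Th Pm Mho k) ** ctrans G ** cmat (beta A Th Pm Mho (k + 1))
               ** lprod X (k + 1))"
proof -
  obtain m where "k = Suc m" using \<open>k \<ge> 1\<close> by (cases k) auto
  moreover have "Re (\<i> * complex_of_real lam) = 0" by simp
  ultimately show ?thesis
    using resolvent_product_identity[OF \<open>hurwitz A\<close> _ \<open>det Th \<noteq> 0\<close>] assms(5,6) by simp
qed

end
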